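(* Let $K$ be a compact convex subset of $\mathbb{R}^N$ and $f:K\to\mathbb{R}$ a function. Let $\mathbf{x}_1,\dots,\mathbf{x}_m,\mathbf{y}_1,\dots,\mathbf{y}_n\in K$ and let $\lambda_1,\dots,\lambda_m>0$, $\mu_1,\dots,\mu_n>0$, so that $\sum_{i=1}^m\lambda_i\delta_{\mathbf{x}_i}$ and $\sum_{j=1}^n\mu_j\delta_{\mathbf{y}_j}$ are positive discrete measures concentrated at points of $K$. Suppose that each $\mathbf{x}_i$ ($i=1,\dots,m$) is a point of convexity of $f$ relative to $K$, and that $$\sum_{i=1}^m\lambda_i\delta_{\mathbf{x}_i}\prec\sum_{j=1}^n\mu_j\delta_{\mathbf{y}_j}.$$ Then $$\sum_{i=1}^m\lambda_i f(\mathbf{x}_i)\le\sum_{j=1}^n\mu_j f(\mathbf{y}_j).$$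
   Context: $\delta_{\mathbf{x}}$ denotes the Dirac measure at $\mathbf{x}$. The relation $\sum_{i=1}^m\lambda_i\delta_{\mathbf{x}_i}\prec\sum_{j=1}^n\mu_j\delta_{\mathbf{y}_j}$ means that there exists an $m\times n$ real matrix $A=(a_{ij})$ such that $a_{ij}\ge0$ for all $i,j$; $\sum_{j=1}^n a_{ij}=1$ for $i=1,\dots,m$; $\mu_j=\sum_{i=1}^m a_{ij}\lambda_i$ for $j=1,\dots,n$; and $\mathbf{x}_i=\sum_{j=1}^n a_{ij}\mathbf{y}_j$ for $i=1,\dots,m$. A point $a\in K$ is a point of convexity of $f$ relative to a convex set $V\subseteq K$ if $a\in V$ and $f(a)\le\sum_{k=1}^n\lambda_k f(x_k)$ for every finite family of points $x_1,\dots,x_n\in V$ and positive weights $\lambda_1,\dots,\lambda_n$ with $\sum_k\lambda_k=1$ and $\sum_k\lambda_k x_k=a$. *)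

theory Defs
  imports "HOL-Analysis.Analysis"
begin

definition point_of_convexity :: "('a::real_vector \<Rightarrow> real) \<Rightarrow> 'a set \<Rightarrow> 'a \<Rightarrow> bool" where
  "point_of_convexity f V a \<longleftrightarrow> a \<in> V \<and>
     (\<forall>(n::nat) (x::nat \<Rightarrow> 'a) (lam::nat \<Rightarrow> real).
        (\<forall>k<n. x k \<in> V) \<and> (\<forall>k<n. lam k > 0) \<and> (\<Sum>k<n. lam k) = 1 \<and>
        (\<Sum>k<n. lam k *\<^sub>R x k) = a
        \<longrightarrow> f a \<le> (\<Sum>k<n. lam k * f (x k)))"

definition measure_majorized ::
  "nat \<Rightarrow> (nat \<Rightarrow> real) \<Rightarrow> (nat \<Rightarrow> 'a::real_vector) \<Rightarrow>
   nat \<Rightarrow> (nat \<Rightarrow> real) \<Rightarrow> (nat \<Rightarrow> 'a) \<Rightarrow> bool" where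
  "measure_majorized m lam x n mu y \<longleftrightarrow>
     (\<exists>A::nat \<Rightarrow> nat \<Rightarrow> real.
        (\<forall>i<m. \<forall>j<n. A i j \<ge> 0) \<and>
        (\<forall>i<m. (\<Sum>j<n. A i j) = 1) \<and>
        (\<forall>j<n. mu j = (\<Sum>i<m. A i j * lam i)) \<and>
        (\<forall>i<m. x i = (\<Sum>j<n. A i j *\<^sub>R y j)))"

end

theory Submission
  imports Defs
begin

text \<open>Each row i of the transport matrix A is a probability vector with barycentre x i, so the
  point-of-convexity property bounds f (x i) by the A-weighted average of the f (y j).
  Weighting these bounds by lam i and summing over i, the column sums of A turn the right-hand
  side into the sum of mu j * f (y j).\<close>

lemma point_of_convexity_sum_positive:
  fixes S :: "nat set"
  assumes "point_of_convexity f V a" and "finite S"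
    and "\<forall>j\<in>S. w j > 0" and "\<forall>j\<in>S. y j \<in> V"
    and "sum w S = 1" and "(\<Sum>j\<in>S. w j *\<^sub>R y j) = a"
  shows "f a \<le> (\<Sum>j\<in>S. w j * f (y j))"
proof -
  define l where "l = sorted_list_of_set S"
  have reindex: "(\<Sum>k<length l. h (l ! k)) = sum h S" for h :: "nat \<Rightarrow> 'c::comm_monoid_add"
  proof -
    have "(\<Sum>k<length l. h (l ! k)) = sum_list (map h l)"
      by (simp add: sum_list_sum_nth lessThan_atLeast0)
    also have "\<dots> = sum h S"
      using \<open>finite S\<close> by (simp add: l_def sum_list_distinct_conv_sum_set)
    finally show ?thesis .
  qed
  have "l ! k \<in> S" if "k < length l" for k
    using nth_mem[OF that] \<open>finite S\<close> by (simp add: l_def)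
  then have "f a \<le> (\<Sum>k<length l. w (l ! k) * f (y (l ! k)))"
    using assms(1,3-6) reindex[of w] reindex[of "\<lambda>j. w j *\<^sub>R y j"]
    unfolding point_of_convexity_def
    by (elim conjE allE[of _ "length l"] allE[of _ "\<lambda>k. y (l ! k)"] allE[of _ "\<lambda>k. w (l ! k)"]) auto
  then show ?thesis
    using reindex[of "\<lambda>j. w j * f (y j)"] by simp
qed

text \<open>The definition only admits strictly positive weights, so zero weights are discarded first.\<close>

lemma point_of_convexity_sum:
  fixes J :: "nat set"
  assumes "point_of_convexity f V a" and "finite J"
    and "\<forall>j\<in>J. w j \<ge> 0" and "\<forall>j\<in>J. y j \<in> V"
    and "sum w J = 1" and "(\<Sum>j\<in>J. w j *\<^sub>R y j) = a"
  shows "f a \<le> (\<Sum>j\<in>J. w j * f (y j))"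
proof -
  define S where "S = {j \<in> J. w j \<noteq> 0}"
  have drop_zeros: "(\<Sum>j\<in>J. g j) = (\<Sum>j\<in>S. g j)"
    if "\<And>j. w j = 0 \<Longrightarrow> g j = 0" for g :: "nat \<Rightarrow> 'c::comm_monoid_add"
    using \<open>finite J\<close> that by (intro sum.mono_neutral_right) (auto simp: S_def)
  have "f a \<le> (\<Sum>j\<in>S. w j * f (y j))"
    using assms(2-6) drop_zeros[of w] drop_zeros[of "\<lambda>j. w j *\<^sub>R y j"]
    by (intro point_of_convexity_sum_positive[OF assms(1)])
       (auto simp: S_def order_le_less)
  then show ?thesis
    using drop_zeros[of "\<lambda>j. w j * f (y j)"] by simp
qed

theorem theorem2:
  fixes K :: "(real ^ 'N) set" and f :: "real ^ 'N \<Rightarrow> real"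
    and m n :: nat and x y :: "nat \<Rightarrow> real ^ 'N" and lam mu :: "nat \<Rightarrow> real"
  assumes "compact K" and "convex K"
    and "\<forall>i<m. x i \<in> K" and "\<forall>j<n. y j \<in> K"
    and "\<forall>i<m. lam i > 0" and "\<forall>j<n. mu j > 0"
    and "\<forall>i<m. point_of_convexity f K (x i)"
    and "measure_majorized m lam x n mu y"
  shows "(\<Sum>i<m. lam i * f (x i)) \<le> (\<Sum>j<n. mu j * f (y j))"
proof -
  obtain A where A_nonneg: "\<forall>i<m. \<forall>j<n. A i j \<ge> 0"
    and A_rows: "\<forall>i<m. (\<Sum>j<n. A i j) = 1"
    and A_cols: "\<forall>j<n. mu j = (\<Sum>i<m. A i j * lam i)"
    and A_bary: "\<forall>i<m. x i = (\<Sum>j<n. A i j *\<^sub>R y j)"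
    using assms(8) unfolding measure_majorized_def by blast
  have row_bound: "f (x i) \<le> (\<Sum>j<n. A i j * f (y j))" if "i < m" for i
  proof (rule point_of_convexity_sum[where f = f and y = y])
    show "point_of_convexity f K (x i)" using that assms(7) by blast
    show "\<forall>j\<in>{..<n}. A i j \<ge> 0" using that A_nonneg by blast
    show "\<forall>j\<in>{..<n}. y j \<in> K" using assms(4) by blast
    show "(\<Sum>j<n. A i j) = 1" using that A_rows by blast
    show "(\<Sum>j<n. A i j *\<^sub>R y j) = x i" using that A_bary by simp
  qed simp
  have "(\<Sum>i<m. lam i * f (x i)) \<le> (\<Sum>i<m. lam i * (\<Sum>j<n. A i j * f (y j)))"
    by (rule sum_mono) (use row_bound assms(5) in \<open>auto intro: mult_left_mono less_imp_le\<close>)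
  also have "\<dots> = (\<Sum>j<n. (\<Sum>i<m. A i j * lam i) * f (y j))"
    by (simp add: sum_distrib_left sum_distrib_right sum.swap[of _ "{..<m}"] algebra_simps)
  also have "\<dots> = (\<Sum>j<n. mu j * f (y j))"
    using A_cols by simp
  finally show ?thesis .
qed

end
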